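(* Let $S$ be a commutative ring, $\delta\in S$, and $r,s\ge0$. (1) If $r\ge1$, then $B_{r,s+1}(S,\delta)\,e_{1,r+s+1}=\iota(B_{r,s}(S,\delta))\,e_{1,r+s+1}$. (2) If $s\ge1$, then $B_{r+1,s}(S,\delta)\,e_{1,r+s+1}=\iota'(B_{r,s}(S,\delta))\,e_{1,r+s+1}$.
   Context: Brauer diagrams and the Brauer algebra $B_m(S,\delta)$: an $(m,m)$-Brauer diagram is a perfect matching of top points $\mathbf p_1,\dots,\mathbf p_m$ and bottom points $\bar{\mathbf p}_1,\dots,\bar{\mathbf p}_m$; $B_m(S,\delta)$ is the free $S$-module on such diagrams with product $ab=\delta^kc$, $c$ obtained by stacking $b$ over $a$ and deleting the $k$ closed loops formed. The walled Brauer algebra $B_{r,s}(S,\delta)\subseteq B_{r+s}(S,\delta)$ is the span of those diagrams in which, calling the points with index $\le r$ "left" and the others "right", no strand joins a top and a bottom point on different sides, and every strand joining two top points or two bottom points joins a left point with a right point. $\iota:B_{r,s}\to B_{r,s+1}$ adds a strand joining $\mathbf p_{r+s+1}$ and $\bar{\mathbf p}_{r+s+1}$; $\iota':B_{r,s}\to B_{r+1,s}$ adds a new leftmost strand joining new points $\mathbf p_1,\bar{\mathbf p}_1$ (shifting the indices of all other points by $1$). $e_{a,b}$ denotes the Brauer diagram joining $\mathbf p_a$ with $\mathbf p_b$, $\bar{\mathbf p}_a$ with $\bar{\mathbf p}_b$, and $\mathbf p_j$ with $\bar{\mathbf p}_j$ for all $j\ne a,b$. *)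

theory Defs
  imports Main
begin

text \<open>Points: Top i is the top point p_i, Bot i the bottom point p-bar_i (indices 1..m).\<close>
datatype pt = Top nat | Bot nat

fun idx :: "pt \<Rightarrow> nat" where
  "idx (Top i) = i" | "idx (Bot i) = i"

fun is_top :: "pt \<Rightarrow> bool" where
  "is_top (Top i) = True" | "is_top (Bot i) = False"

definition pts :: "nat \<Rightarrow> pt set" where
  "pts m = {p. 1 \<le> idx p \<and> idx p \<le> m}"

text \<open>A diagram is a perfect matching on pts m, encoded as a fixed-point-free
  involution on pts m, extended by the identity outside pts m.\<close>
type_synonym diagram = "pt \<Rightarrow> pt"

definition brauer :: "nat \<Rightarrow> diagram set" where
  "brauer m = {d. (\<forall>p\<in>pts m. d p \<in> pts m \<and> d p \<noteq> p \<and> d (d p) = p)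
                  \<and> (\<forall>p. p \<notin> pts m \<longrightarrow> d p = p)}"

text \<open>Three layers of points: upper (top of b), middle (bottom of b = top of a),
  lower (bottom of a).\<close>
datatype lpt = Up nat | Mid nat | Lo nat

fun emb_upper :: "pt \<Rightarrow> lpt" where
  "emb_upper (Top i) = Up i" | "emb_upper (Bot i) = Mid i"

fun emb_lower :: "pt \<Rightarrow> lpt" where
  "emb_lower (Top i) = Mid i" | "emb_lower (Bot i) = Lo i"

fun outer :: "pt \<Rightarrow> lpt" where
  "outer (Top i) = Up i" | "outer (Bot i) = Lo i"

definition stack_edges :: "nat \<Rightarrow> diagram \<Rightarrow> diagram \<Rightarrow> (lpt \<times> lpt) set" where
  "stack_edges m a b =
     {(emb_upper p, emb_upper (b p)) | p. p \<in> pts m} \<union>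
     {(emb_lower p, emb_lower (a p)) | p. p \<in> pts m}"

definition compose :: "nat \<Rightarrow> diagram \<Rightarrow> diagram \<Rightarrow> diagram" where
  "compose m a b = (\<lambda>p. if p \<in> pts m
       then (THE q. q \<in> pts m \<and> q \<noteq> p \<and> (outer p, outer q) \<in> (stack_edges m a b)\<^sup>*)
       else p)"

text \<open>Number of closed loops: connected components consisting of middle points only.\<close>
definition loops :: "nat \<Rightarrow> diagram \<Rightarrow> diagram \<Rightarrow> nat" where
  "loops m a b = card {C. \<exists>i\<in>{1..m}. C = ((stack_edges m a b)\<^sup>*) `` {Mid i}
                                        \<and> C \<subseteq> range Mid}"

type_synonym 'a elem = "diagram \<Rightarrow> 'a"

definition brauer_alg :: "nat \<Rightarrow> ('a::comm_ring_1) elem set" where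
  "brauer_alg m = {x. \<forall>d. d \<notin> brauer m \<longrightarrow> x d = 0}"

definition basis :: "diagram \<Rightarrow> ('a::comm_ring_1) elem" where
  "basis d = (\<lambda>d'. if d' = d then 1 else 0)"

definition bmult :: "nat \<Rightarrow> 'a::comm_ring_1 \<Rightarrow> 'a elem \<Rightarrow> 'a elem \<Rightarrow> 'a elem" where
  "bmult m \<delta> x y = (\<lambda>c. \<Sum>a\<in>brauer m. \<Sum>b\<in>brauer m.
       if compose m a b = c then x a * y b * \<delta> ^ loops m a b else 0)"

definition walled :: "nat \<Rightarrow> nat \<Rightarrow> diagram set" where
  "walled r s = {d \<in> brauer (r + s). \<forall>p \<in> pts (r + s).
      (is_top p \<noteq> is_top (d p) \<longrightarrow> (idx p \<le> r \<longleftrightarrow> idx (d p) \<le> r)) \<and>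
      (is_top p = is_top (d p) \<longrightarrow> (idx p \<le> r \<longleftrightarrow> \<not> idx (d p) \<le> r))}"

definition walled_alg :: "nat \<Rightarrow> nat \<Rightarrow> ('a::comm_ring_1) elem set" where
  "walled_alg r s = {x \<in> brauer_alg (r + s). \<forall>d. x d \<noteq> 0 \<longrightarrow> d \<in> walled r s}"

definition lin_ext :: "nat \<Rightarrow> (diagram \<Rightarrow> diagram) \<Rightarrow> ('a::comm_ring_1) elem \<Rightarrow> 'a elem" where
  "lin_ext m f x = (\<lambda>d'. \<Sum>d\<in>brauer m. if f d = d' then x d else 0)"

definition ext_right :: "nat \<Rightarrow> diagram \<Rightarrow> diagram" where
  "ext_right m d = (\<lambda>p. if p = Top (m + 1) then Bot (m + 1)
                         else if p = Bot (m + 1) then Top (m + 1) else d p)"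

fun shift_up :: "pt \<Rightarrow> pt" where
  "shift_up (Top i) = Top (i + 1)" | "shift_up (Bot i) = Bot (i + 1)"

fun shift_down :: "pt \<Rightarrow> pt" where
  "shift_down (Top i) = Top (i - 1)" | "shift_down (Bot i) = Bot (i - 1)"

definition ext_left :: "diagram \<Rightarrow> diagram" where
  "ext_left d = (\<lambda>p. if p = Top 1 then Bot 1
                     else if p = Bot 1 then Top 1
                     else if 2 \<le> idx p then shift_up (d (shift_down p)) else p)"

definition iota :: "nat \<Rightarrow> nat \<Rightarrow> ('a::comm_ring_1) elem \<Rightarrow> 'a elem" where
  "iota r s = lin_ext (r + s) (ext_right (r + s))"

definition iota' :: "nat \<Rightarrow> nat \<Rightarrow> ('a::comm_ring_1) elem \<Rightarrow> 'a elem" where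
  "iota' r s = lin_ext (r + s) ext_left"

definition e_diag :: "nat \<Rightarrow> nat \<Rightarrow> nat \<Rightarrow> diagram" where
  "e_diag m a b = (\<lambda>p. if p \<notin> pts m then p
       else if p = Top a then Top b else if p = Top b then Top a
       else if p = Bot a then Bot b else if p = Bot b then Bot a
       else (case p of Top j \<Rightarrow> Bot j | Bot j \<Rightarrow> Top j))"

end

theory Submission
  imports Defs
begin

(* Write m = r + s + 1 and e = e_{1,m}.  Right multiplication by a basis diagram sends each
   diagram a to a single diagram times a power of delta, so both sets of products coincide
   as soon as every walled diagram a of the larger algebra has the same product with e as the
   image of a walled diagram of B_{r,s}, with no closed loop (the coefficient of a, times its
   power of delta, is then moved to that preimage).
   Next the product a e is computed explicitly: it is e_product m a, which caps p_1 with p_m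
   and joins the two former partners of p_1 and p_m; a loop appears iff a joins p_1 with p_m.
   Conversely uncap m H u is a preimage of any capped H without loop, for every choice u of
   the new partner of p_1.  Walled diagrams are those whose strands join points on opposite
   "sides", which both constructions respect.  Choosing u = (a e)(bar p_m) leaves a vertical
   strand at position m, so the lift lies in the image of iota (part 1); choosing u = bar p_1
   leaves one at position 1, so it lies in the image of iota' (part 2). *)

lemma pts_iff: "p \<in> pts m \<longleftrightarrow> 1 \<le> idx p \<and> idx p \<le> m"
  by (simp add: pts_def)

lemma Top_pts [simp]: "Top i \<in> pts m \<longleftrightarrow> 1 \<le> i \<and> i \<le> m"
  by (simp add: pts_def)

lemma Bot_pts [simp]: "Bot i \<in> pts m \<longleftrightarrow> 1 \<le> i \<and> i \<le> m"
  by (simp add: pts_def)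

lemma pts_Suc: "p \<in> pts (Suc M) \<longleftrightarrow> p \<in> pts M \<or> p = Top (Suc M) \<or> p = Bot (Suc M)"
  by (cases p) (auto simp: pts_def)

lemma finite_pts: "finite (pts m)"
proof -
  have "pts m \<subseteq> Top ` {1..m} \<union> Bot ` {1..m}"
  proof
    fix p assume "p \<in> pts m"
    thus "p \<in> Top ` {1..m} \<union> Bot ` {1..m}" by (cases p) auto
  qed
  thus ?thesis by (rule finite_subset) auto
qed

text \<open>There are only finitely many diagrams, so the sums in the algebra are finite sums:
  a diagram is determined by its restriction to the finite set of points.\<close>
lemma finite_brauer: "finite (brauer m)"
proof -
  let ?restrict = "\<lambda>f p. if p \<in> pts m then f p else p"
  let ?S = "{f. \<forall>p. (p \<in> pts m \<longrightarrow> f p \<in> pts m) \<and> (p \<notin> pts m \<longrightarrow> f p = undefined)}"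
  have "brauer m \<subseteq> ?restrict ` ?S"
  proof
    fix d assume d: "d \<in> brauer m"
    let ?f = "\<lambda>p. if p \<in> pts m then d p else undefined"
    have "?f \<in> ?S" "d = ?restrict ?f" using d by (auto simp: brauer_def)
    thus "d \<in> ?restrict ` ?S" by (rule image_eqI[where f = ?restrict, rotated])
  qed
  moreover have "finite ?S" by (rule finite_set_of_finite_funs[OF finite_pts finite_pts])
  ultimately show ?thesis using finite_subset by blast
qed

lemma brauerD:
  assumes "a \<in> brauer m"
  shows "p \<in> pts m \<Longrightarrow> a p \<in> pts m" "p \<in> pts m \<Longrightarrow> a p \<noteq> p" "a (a p) = p"
    "p \<notin> pts m \<Longrightarrow> a p = p"
proof -
  have d: "\<forall>p\<in>pts m. a p \<in> pts m \<and> a p \<noteq> p \<and> a (a p) = p" "\<forall>p. p \<notin> pts m \<longrightarrow> a p = p"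
    using assms unfolding brauer_def by auto
  show "p \<in> pts m \<Longrightarrow> a p \<in> pts m" "p \<in> pts m \<Longrightarrow> a p \<noteq> p" "p \<notin> pts m \<Longrightarrow> a p = p"
    using d by auto
  show "a (a p) = p" using d by (cases "p \<in> pts m") auto
qed

lemma brauerI:
  assumes "\<And>p. p \<in> pts m \<Longrightarrow> a p \<in> pts m" "\<And>p. p \<in> pts m \<Longrightarrow> a p \<noteq> p"
    "\<And>p. p \<in> pts m \<Longrightarrow> a (a p) = p" "\<And>p. p \<notin> pts m \<Longrightarrow> a p = p"
  shows "a \<in> brauer m"
  using assms unfolding brauer_def by blast

lemma brauer_partner: "a \<in> brauer m \<Longrightarrow> a p = q \<Longrightarrow> a q = p"
  using brauerD(3) by metis

lemma brauer_inj: "a \<in> brauer m \<Longrightarrow> a p = a q \<Longrightarrow> p = q"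
  using brauerD(3) by metis


section \<open>Right multiplication by a basis diagram\<close>

definition prod_coeff :: "nat \<Rightarrow> 'a::comm_ring_1 \<Rightarrow> diagram \<Rightarrow> diagram \<Rightarrow> diagram \<Rightarrow> 'a" where
  "prod_coeff m \<delta> y a c = (if compose m a y = c then \<delta> ^ loops m a y else 0)"

definition supported :: "diagram set \<Rightarrow> ('a::comm_ring_1) elem set" where
  "supported W = {x. \<forall>d. x d \<noteq> 0 \<longrightarrow> d \<in> W}"

lemma walled_alg_eq_supported: "walled_alg r s = supported (walled r s)"
  unfolding walled_alg_def supported_def brauer_alg_def walled_def by auto

lemma bmult_basis_right:
  assumes y: "y \<in> brauer m"
  shows "bmult m \<delta> x (basis y) c = (\<Sum>a\<in>brauer m. x a * prod_coeff m \<delta> y a c)"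
proof -
  have "bmult m \<delta> x (basis y) c = (\<Sum>a\<in>brauer m. \<Sum>b\<in>brauer m.
      if b = y then (if compose m a y = c then x a * \<delta> ^ loops m a y else 0) else 0)"
    unfolding bmult_def by (intro sum.cong refl) (auto simp: basis_def)
  also have "\<dots> = (\<Sum>a\<in>brauer m. x a * prod_coeff m \<delta> y a c)"
    using y finite_brauer by (intro sum.cong refl) (simp add: sum.delta prod_coeff_def)
  finally show ?thesis .
qed

lemma bmult_lin_ext_basis_right:
  assumes y: "y \<in> brauer m" and f: "f ` brauer M \<subseteq> brauer m"
  shows "bmult m \<delta> (lin_ext M f z) (basis y) c = (\<Sum>d\<in>brauer M. z d * prod_coeff m \<delta> y (f d) c)"
proof -
  have "bmult m \<delta> (lin_ext M f z) (basis y) c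
     = (\<Sum>b\<in>brauer m. \<Sum>d\<in>brauer M. if f d = b then z d * prod_coeff m \<delta> y b c else 0)"
    unfolding bmult_basis_right[OF y] lin_ext_def sum_distrib_right
    by (intro sum.cong refl) auto
  also have "\<dots> = (\<Sum>d\<in>brauer M. \<Sum>b\<in>brauer m. if f d = b then z d * prod_coeff m \<delta> y b c else 0)"
    by (rule sum.swap)
  also have "\<dots> = (\<Sum>d\<in>brauer M. z d * prod_coeff m \<delta> y (f d) c)"
    using f finite_brauer by (intro sum.cong refl) (auto simp: sum.delta)
  finally show ?thesis .
qed

lemma lin_ext_supported:
  assumes "x \<in> supported W0" and "f ` W0 \<subseteq> W1"
  shows "lin_ext M f x \<in> supported W1"
  unfolding supported_def
proof (intro CollectI allI impI)
  fix b assume "lin_ext M f x b \<noteq> 0"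
  hence "\<exists>d\<in>brauer M. (if f d = b then x d else 0) \<noteq> 0"
    unfolding lin_ext_def using sum.neutral[of "brauer M" "\<lambda>d. if f d = b then x d else 0"] by blast
  then obtain d where "d \<in> brauer M" "f d = b" "x d \<noteq> 0" by (auto split: if_splits)
  thus "b \<in> W1" using assms unfolding supported_def by auto
qed

text \<open>The transfer principle: suppose every diagram a of W1 has the same product with y as
  the image under f of some diagram of W0, where this image produces no closed loop.  Then a
  right multiple of y by an element supported on W1 is also a right multiple of y by the
  linear image of an element supported on W0: the coefficient of a, together with the factor
  delta^loops of its product, is moved onto a chosen preimage of a.\<close>
lemma right_mult_transfer:
  fixes \<delta> :: "'a::comm_ring_1"
  assumes y: "y \<in> brauer m" and f: "f ` brauer M \<subseteq> brauer m"
    and W1: "W1 \<subseteq> brauer m" and W0: "W0 \<subseteq> brauer M"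
    and red: "\<forall>a\<in>W1. \<exists>d\<in>W0. compose m (f d) y = compose m a y \<and> loops m (f d) y = 0"
    and x: "x \<in> supported W1"
  shows "\<exists>z\<in>supported W0. bmult m \<delta> (lin_ext M f z) (basis y) = bmult m \<delta> x (basis y)"
proof -
  have "\<forall>a\<in>W1. \<exists>d. d \<in> W0 \<and> compose m (f d) y = compose m a y \<and> loops m (f d) y = 0"
    using red by blast
  from bchoice[OF this] obtain F where F: "\<And>a. a \<in> W1 \<Longrightarrow>
      F a \<in> W0 \<and> compose m (f (F a)) y = compose m a y \<and> loops m (f (F a)) y = 0"
    by blast
  define z where "z d = (\<Sum>a\<in>W1. if F a = d then x a * \<delta> ^ loops m a y else 0)" for d
  have z: "z \<in> supported W0"
    unfolding supported_def
  proof (intro CollectI allI impI)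
    fix d assume "z d \<noteq> 0"
    hence "\<exists>a\<in>W1. (if F a = d then x a * \<delta> ^ loops m a y else 0) \<noteq> 0"
      unfolding z_def using sum.neutral[of W1 "\<lambda>a. if F a = d then x a * \<delta> ^ loops m a y else 0"]
      by blast
    then obtain a where "a \<in> W1" "F a = d" by (auto split: if_splits)
    thus "d \<in> W0" using F by auto
  qed
  have "bmult m \<delta> (lin_ext M f z) (basis y) c = bmult m \<delta> x (basis y) c" for c
  proof -
    have "bmult m \<delta> (lin_ext M f z) (basis y) c = (\<Sum>d\<in>brauer M. z d * prod_coeff m \<delta> y (f d) c)"
      by (rule bmult_lin_ext_basis_right[OF y f])
    also have "\<dots> = (\<Sum>a\<in>W1. \<Sum>d\<in>brauer M.
        if F a = d then x a * \<delta> ^ loops m a y * prod_coeff m \<delta> y (f d) c else 0)"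
      unfolding z_def sum_distrib_right by (subst sum.swap) (intro sum.cong refl, auto)
    also have "\<dots> = (\<Sum>a\<in>W1. x a * \<delta> ^ loops m a y * prod_coeff m \<delta> y (f (F a)) c)"
      using F W0 finite_brauer by (intro sum.cong refl) (auto simp: sum.delta)
    also have "\<dots> = (\<Sum>a\<in>W1. x a * prod_coeff m \<delta> y a c)"
      using F by (intro sum.cong refl) (simp add: prod_coeff_def)
    also have "\<dots> = (\<Sum>a\<in>brauer m. x a * prod_coeff m \<delta> y a c)"
      using x W1 finite_brauer unfolding supported_def
      by (intro sum.mono_neutral_left) (auto, metis mult_zero_left)
    also have "\<dots> = bmult m \<delta> x (basis y) c" by (rule bmult_basis_right[OF y, symmetric])
    finally show ?thesis .
  qed
  thus ?thesis using z by blast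
qed

lemma right_mult_image_eq:
  fixes \<delta> :: "'a::comm_ring_1"
  assumes y: "y \<in> brauer m" and f: "f ` brauer M \<subseteq> brauer m" and fW: "f ` W0 \<subseteq> W1"
    and W1: "W1 \<subseteq> brauer m" and W0: "W0 \<subseteq> brauer M"
    and red: "\<forall>a\<in>W1. \<exists>d\<in>W0. compose m (f d) y = compose m a y \<and> loops m (f d) y = 0"
  shows "{bmult m \<delta> x (basis y) | x. x \<in> supported W1}
       = {bmult m \<delta> (lin_ext M f x) (basis y) | x. x \<in> supported W0}"
proof (rule set_eqI, rule iffI)
  fix v assume "v \<in> {bmult m \<delta> x (basis y) | x. x \<in> supported W1}"
  then obtain x where v: "v = bmult m \<delta> x (basis y)" and x: "x \<in> supported W1" by blast
  then obtain z where "z \<in> supported W0" "bmult m \<delta> (lin_ext M f z) (basis y) = v"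
    using right_mult_transfer[OF y f W1 W0 red x] by blast
  thus "v \<in> {bmult m \<delta> (lin_ext M f x) (basis y) | x. x \<in> supported W0}" by blast
next
  fix v assume "v \<in> {bmult m \<delta> (lin_ext M f x) (basis y) | x. x \<in> supported W0}"
  thus "v \<in> {bmult m \<delta> x (basis y) | x. x \<in> supported W1}"
    using lin_ext_supported[OF _ fW] by blast
qed

section \<open>Right multiplication by e_{1,m}\<close>

text \<open>The diagram underlying the product a e_{1,m}: the cap of e_{1,m} joins p_1 and p_m,
  and its lower cap joins the two strands of a that end at p_1 and p_m; all other strands
  of a pass straight through.\<close>
definition e_product :: "nat \<Rightarrow> diagram \<Rightarrow> diagram" where
  "e_product m a = (\<lambda>p. if p \<notin> pts m then p else if p = Top 1 then Top m else if p = Top m then Top 1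
     else if a p = Top 1 then a (Top m) else if a p = Top m then a (Top 1) else a p)"

lemma e_product_brauer:
  assumes m: "2 \<le> m" and a: "a \<in> brauer m"
  shows "e_product m a \<in> brauer m"
proof (rule brauerI)
  note b = brauerD[OF a] and inj = brauer_inj[OF a]
  have t: "Top 1 \<in> pts m" "Top m \<in> pts m" "Top 1 \<noteq> Top m" using m by auto
  fix p
  show "p \<notin> pts m \<Longrightarrow> e_product m a p = p" by (simp add: e_product_def)
  assume p: "p \<in> pts m"
  show "e_product m a p \<in> pts m" using p t b by (simp add: e_product_def)
  show "e_product m a p \<noteq> p" "e_product m a (e_product m a p) = p"
    using p t b(1,2,3) inj[of p "Top 1"] inj[of p "Top m"] inj[of "Top 1" "Top m"]
    by (auto simp: e_product_def dest: brauer_partner[OF a])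
qed

lemma e_diag_brauer: assumes "2 \<le> m" shows "e_diag m 1 m \<in> brauer m"
proof (rule brauerI)
  fix p
  show "p \<notin> pts m \<Longrightarrow> e_diag m 1 m p = p" by (simp add: e_diag_def)
  assume p: "p \<in> pts m"
  show "e_diag m 1 m p \<in> pts m" "e_diag m 1 m p \<noteq> p" "e_diag m 1 m (e_diag m 1 m p) = p"
    using p assms by (cases p; auto simp: e_diag_def)+
qed

lemma e_diag_Top: "2 \<le> m \<Longrightarrow> 1 \<le> j \<Longrightarrow> j \<le> m \<Longrightarrow>
   e_diag m 1 m (Top j) = (if j = 1 then Top m else if j = m then Top 1 else Bot j)"
  by (auto simp: e_diag_def)

lemma e_diag_Bot: "2 \<le> m \<Longrightarrow> 1 \<le> j \<Longrightarrow> j \<le> m \<Longrightarrow>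
   e_diag m 1 m (Bot j) = (if j = 1 then Bot m else if j = m then Bot 1 else Top j)"
  by (auto simp: e_diag_def)

lemma stack_edge_upper: "p \<in> pts m \<Longrightarrow> (emb_upper p, emb_upper (b p)) \<in> stack_edges m a b"
  unfolding stack_edges_def by blast

lemma stack_edge_lower: "p \<in> pts m \<Longrightarrow> (emb_lower p, emb_lower (a p)) \<in> stack_edges m a b"
  unfolding stack_edges_def by blast

lemma stack_edgeE:
  assumes "(x, y) \<in> stack_edges m a b"
  obtains p where "p \<in> pts m" "x = emb_upper p" "y = emb_upper (b p)"
    | p where "p \<in> pts m" "x = emb_lower p" "y = emb_lower (a p)"
  using assms unfolding stack_edges_def by blast

text \<open>To identify the connected components of the graph obtained by stacking e_{1,m} over a,
  every vertex is tagged with the endpoints {p, e_product m a p} of the strand of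
  e_product m a through it; the vertices of the closed loop (which exists iff a joins p_1 with
  p_m) get the empty tag.\<close>
definition cap_tag :: "nat \<Rightarrow> diagram \<Rightarrow> pt set" where
  "cap_tag m a = (if a (Top 1) = Top m then {} else {a (Top 1), a (Top m)})"

definition strand_tag :: "nat \<Rightarrow> diagram \<Rightarrow> lpt \<Rightarrow> pt set" where
  "strand_tag m a x = (case x of
       Up j \<Rightarrow> if j = 1 \<or> j = m then {Top 1, Top m} else {Top j, e_product m a (Top j)}
     | Mid j \<Rightarrow> if j = 1 \<or> j = m then cap_tag m a else {Top j, e_product m a (Top j)}
     | Lo j \<Rightarrow> {Bot j, e_product m a (Bot j)})"

context
  fixes m :: nat and a :: diagram
  assumes m: "2 \<le> m" and a: "a \<in> brauer m"
begin

private abbreviation "e \<equiv> e_diag m 1 m"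
private abbreviation "E \<equiv> stack_edges m a e"

private lemma tops: "Top 1 \<in> pts m" "Top m \<in> pts m" "Top 1 \<noteq> Top m"
  using m by auto

lemma strand_tag_lower: "p \<in> pts m \<Longrightarrow>
    strand_tag m a (emb_lower p) = (if p = Top 1 \<or> p = Top m then cap_tag m a else {p, e_product m a p})"
  by (cases p) (auto simp: strand_tag_def)

lemma strand_tag_outer: "p \<in> pts m \<Longrightarrow> strand_tag m a (outer p) = {p, e_product m a p}"
  by (cases p) (auto simp: strand_tag_def e_product_def)

lemma strand_tag_upper_edge:
  assumes p: "p \<in> pts m"
  shows "strand_tag m a (emb_upper p) = strand_tag m a (emb_upper (e p))"
proof (cases p)
  case (Top j)
  have "e (Top j) = (if j = 1 then Top m else if j = m then Top 1 else Bot j)"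
    using p Top m by (intro e_diag_Top) auto
  thus ?thesis using p Top m by (auto simp: strand_tag_def)
next
  case (Bot j)
  have "e (Bot j) = (if j = 1 then Bot m else if j = m then Bot 1 else Top j)"
    using p Bot m by (intro e_diag_Bot) auto
  thus ?thesis using p Bot m by (auto simp: strand_tag_def)
qed

lemma strand_tag_lower_edge:
  assumes p: "p \<in> pts m"
  shows "strand_tag m a (emb_lower p) = strand_tag m a (emb_lower (a p))"
  unfolding strand_tag_lower[OF p] strand_tag_lower[OF brauerD(1)[OF a p]]
  using p tops brauerD[OF a] brauer_inj[OF a, of "Top 1" "Top m"]
  by (auto simp: cap_tag_def e_product_def dest: brauer_partner[OF a])

lemma stack_path_tag: assumes "(x, y) \<in> E\<^sup>*" shows "strand_tag m a x = strand_tag m a y"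
  using assms
proof (induction rule: rtrancl_induct)
  case (step y z)
  from step.hyps(2) have "strand_tag m a y = strand_tag m a z"
    by (cases rule: stack_edgeE) (simp_all add: strand_tag_upper_edge strand_tag_lower_edge)
  thus ?case using step.IH by simp
qed simp

lemma e_vertical_edges: "j \<in> {2..<m} \<Longrightarrow> (Up j, Mid j) \<in> E \<and> (Mid j, Up j) \<in> E"
proof -
  assume j: "j \<in> {2..<m}"
  have "e (Top j) = Bot j" "e (Bot j) = Top j" "Top j \<in> pts m" "Bot j \<in> pts m"
    using j m by (auto simp: e_diag_def)
  thus ?thesis using stack_edge_upper[of "Top j" m e a] stack_edge_upper[of "Bot j" m e a] by auto
qed

lemma e_cap_edges: "(Up 1, Up m) \<in> E" "(Up m, Up 1) \<in> E" "(Mid 1, Mid m) \<in> E" "(Mid m, Mid 1) \<in> E"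
proof -
  have "e (Top 1) = Top m" "e (Top m) = Top 1" "e (Bot 1) = Bot m" "e (Bot m) = Bot 1"
    using m by (auto simp: e_diag_def)
  thus "(Up 1, Up m) \<in> E" "(Up m, Up 1) \<in> E" "(Mid 1, Mid m) \<in> E" "(Mid m, Mid 1) \<in> E"
    using stack_edge_upper[of "Top 1" m e a] stack_edge_upper[of "Top m" m e a]
      stack_edge_upper[of "Bot 1" m e a] stack_edge_upper[of "Bot m" m e a] tops by auto
qed

lemma outer_lower_connected:
  assumes q: "q \<in> pts m" "q \<noteq> Top 1" "q \<noteq> Top m"
  shows "(outer q, emb_lower q) \<in> E\<^sup>*" "(emb_lower q, outer q) \<in> E\<^sup>*"
proof -
  have "(outer q, emb_lower q) \<in> E\<^sup>* \<and> (emb_lower q, outer q) \<in> E\<^sup>*"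
  proof (cases q)
    case (Top j)
    hence "j \<in> {2..<m}" using q by auto
    from e_vertical_edges[OF this] show ?thesis using Top by auto
  qed auto
  thus "(outer q, emb_lower q) \<in> E\<^sup>*" "(emb_lower q, outer q) \<in> E\<^sup>*" by auto
qed

lemma stack_path_e_product: assumes p: "p \<in> pts m" shows "(outer p, outer (e_product m a p)) \<in> E\<^sup>*"
proof (cases "p = Top 1 \<or> p = Top m")
  case True
  thus ?thesis using e_cap_edges tops by (auto simp: e_product_def)
next
  case outer: False
  have to_a: "(outer p, emb_lower (a p)) \<in> E\<^sup>*"
    using outer_lower_connected(1)[OF p] outer stack_edge_lower[OF p] by (blast intro: rtrancl_into_rtrancl)
  show ?thesis
  proof (cases "a p = Top 1 \<or> a p = Top m")
    case True
    let ?o = "if a p = Top 1 then Top m else Top 1"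
    have o: "?o \<in> pts m" using tops by auto
    have "(emb_lower (a p), emb_lower ?o) \<in> E" using True e_cap_edges tops by auto
    moreover have "(emb_lower ?o, emb_lower (a ?o)) \<in> E" using stack_edge_lower[OF o] .
    ultimately have "(outer p, emb_lower (a ?o)) \<in> E\<^sup>*" using to_a by (blast intro: rtrancl_into_rtrancl)
    moreover have ao: "a ?o \<in> pts m" "a ?o \<noteq> Top 1" "a ?o \<noteq> Top m"
      using brauerD[OF a] o outer True by (auto split: if_splits dest: brauer_partner[OF a])
    moreover have "e_product m a p = a ?o" using True outer p tops by (auto simp: e_product_def)
    ultimately show ?thesis using outer_lower_connected(2)[OF ao] by (auto intro: rtrancl_trans)
  next
    case False
    have "e_product m a p = a p" using False outer p by (simp add: e_product_def)
    moreover have "a p \<in> pts m" using brauerD(1)[OF a p] .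
    ultimately show ?thesis using False outer_lower_connected(2) to_a by (auto intro: rtrancl_trans)
  qed
qed

lemma compose_e_diag: "compose m a e = e_product m a"
proof
  fix p
  show "compose m a e p = e_product m a p"
  proof (cases "p \<in> pts m")
    case False thus ?thesis by (simp add: compose_def e_product_def)
  next
    case p: True
    note c = brauerD[OF e_product_brauer[OF m a]]
    have "(THE q. q \<in> pts m \<and> q \<noteq> p \<and> (outer p, outer q) \<in> E\<^sup>*) = e_product m a p"
    proof (rule the_equality)
      show "e_product m a p \<in> pts m \<and> e_product m a p \<noteq> p \<and> (outer p, outer (e_product m a p)) \<in> E\<^sup>*"
        using c p stack_path_e_product[OF p] by auto
    next
      fix q assume q: "q \<in> pts m \<and> q \<noteq> p \<and> (outer p, outer q) \<in> E\<^sup>*"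
      hence "{p, e_product m a p} = {q, e_product m a q}"
        using stack_path_tag[of "outer p" "outer q"] strand_tag_outer p by auto
      thus "q = e_product m a p" using q by (auto simp: doubleton_eq_iff)
    qed
    thus ?thesis using p by (simp add: compose_def)
  qed
qed

lemma outer_not_Mid: "outer p \<notin> range Mid"
  by (cases p) auto

text \<open>The component of a middle point Mid i consists of middle points only exactly when it
  is the closed loop.  A vertical strand of e_{1,m} leaves the middle row at 1 < i < m.\<close>
lemma through_component: "i \<in> {2..<m} \<Longrightarrow> \<not> E\<^sup>* `` {Mid i} \<subseteq> range Mid"
  using e_vertical_edges by auto

lemma open_cap_component:
  assumes open_cap: "a (Top 1) \<noteq> Top m" and i: "i = 1 \<or> i = m"
  shows "\<not> E\<^sup>* `` {Mid i} \<subseteq> range Mid"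
proof -
  have t: "Top i \<in> pts m" "emb_lower (Top i) = Mid i" using i tops by auto
  have at: "a (Top i) \<in> pts m" "a (Top i) \<noteq> Top 1" "a (Top i) \<noteq> Top m"
    using brauerD(1,2)[OF a t(1)] open_cap i by (auto dest: brauer_partner[OF a])
  have "(Mid i, outer (a (Top i))) \<in> E\<^sup>*"
    using stack_edge_lower[OF t(1)] t(2) outer_lower_connected(2)[OF at]
    by (metis converse_rtrancl_into_rtrancl)
  thus ?thesis using outer_not_Mid[of "a (Top i)"] by blast
qed

lemma closed_cap_component:
  assumes closed_cap: "a (Top 1) = Top m" and i: "i = 1 \<or> i = m"
  shows "E\<^sup>* `` {Mid i} = {Mid 1, Mid m}"
proof
  show "E\<^sup>* `` {Mid i} \<subseteq> {Mid 1, Mid m}"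
  proof
    fix y assume "y \<in> E\<^sup>* `` {Mid i}"
    hence "strand_tag m a y = strand_tag m a (Mid i)" using stack_path_tag by auto
    also have "\<dots> = {}" using i closed_cap by (auto simp: strand_tag_def cap_tag_def)
    finally show "y \<in> {Mid 1, Mid m}" by (cases y) (auto simp: strand_tag_def split: if_splits)
  qed
  show "{Mid 1, Mid m} \<subseteq> E\<^sup>* `` {Mid i}" using i e_cap_edges by auto
qed

lemma loops_e_diag: "loops m a e = (if a (Top 1) = Top m then 1 else 0)"
proof -
  let ?loop_components = "{C. \<exists>i\<in>{1..m}. C = E\<^sup>* `` {Mid i} \<and> C \<subseteq> range Mid}"
  have cases_i: "i \<in> {2..<m} \<or> i = 1 \<or> i = m" if "i \<in> {1..m}" for i
    using that by auto
  have "?loop_components = (if a (Top 1) = Top m then {{Mid 1, Mid m}} else {})"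
  proof (cases "a (Top 1) = Top m")
    case True
    have "C = {Mid 1, Mid m}" if C: "C \<in> ?loop_components" for C
    proof -
      obtain i where i: "i \<in> {1..m}" "C = E\<^sup>* `` {Mid i}" "C \<subseteq> range Mid"
        using C by blast
      hence "i = 1 \<or> i = m" using cases_i through_component by blast
      thus ?thesis using i(2) closed_cap_component[OF True] by blast
    qed
    moreover have "{Mid 1, Mid m} \<in> ?loop_components"
      using closed_cap_component[OF True, of 1] tops by auto
    ultimately have "?loop_components = {{Mid 1, Mid m}}" by blast
    thus ?thesis using True by simp
  next
    case False
    have "\<not> E\<^sup>* `` {Mid i} \<subseteq> range Mid" if "i \<in> {1..m}" for i
      using cases_i[OF that] through_component open_cap_component[OF False] by blast
    hence "?loop_components = {}" by blast
    thus ?thesis using False by simp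
  qed
  thus ?thesis by (simp add: loops_def)
qed

end


section \<open>Lifting along right multiplication by e_{1,m}\<close>

text \<open>It is a
  preimage of H under e_product that does not join p_1 with p_m, so no loop arises.\<close>
definition uncap :: "nat \<Rightarrow> diagram \<Rightarrow> pt \<Rightarrow> diagram" where
  "uncap m H u = (\<lambda>p. if p = Top 1 then u else if p = u then Top 1 else if p = Top m then H u
     else if p = H u then Top m else H p)"

context
  fixes m :: nat and H :: diagram and u :: pt
  assumes m: "2 \<le> m" and H: "H \<in> brauer m" and H1: "H (Top 1) = Top m"
    and u: "u \<in> pts m" "u \<noteq> Top 1" "u \<noteq> Top m"
begin

private lemma capped_facts: "H (Top m) = Top 1" "H u \<in> pts m" "H u \<noteq> Top 1" "H u \<noteq> Top m" "H u \<noteq> u"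
  "H (H u) = u" "Top 1 \<in> pts m" "Top m \<in> pts m" "Top 1 \<noteq> Top m"
proof -
  show Hm: "H (Top m) = Top 1" using brauer_partner[OF H H1] .
  show "H u \<in> pts m" "H u \<noteq> u" "H (H u) = u" using brauerD[OF H] u(1) by auto
  show "H u \<noteq> Top 1" using brauer_partner[OF H, of u "Top 1"] H1 u(3) by auto
  show "H u \<noteq> Top m" using brauer_partner[OF H, of u "Top m"] Hm u(2) by auto
  show "Top 1 \<in> pts m" "Top m \<in> pts m" "Top 1 \<noteq> Top m" using m by auto
qed

lemma uncap_values: "uncap m H u (Top 1) = u" "uncap m H u u = Top 1"
  "uncap m H u (Top m) = H u" "uncap m H u (H u) = Top m"
  "p \<notin> {Top 1, u, Top m, H u} \<Longrightarrow> uncap m H u p = H p"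
  using capped_facts u unfolding uncap_def by auto

private lemma H_other:
  assumes "p \<notin> {Top 1, u, Top m, H u}" shows "H p \<notin> {Top 1, u, Top m, H u}"
proof -
  have "H p \<noteq> Top 1" using brauer_partner[OF H, of p "Top 1"] H1 assms by auto
  moreover have "H p \<noteq> Top m" using brauer_partner[OF H, of p "Top m"] capped_facts(1) assms by auto
  moreover have "H p \<noteq> u" using brauer_partner[OF H, of p u] assms by auto
  moreover have "H p \<noteq> H u" using brauer_inj[OF H, of p u] assms by auto
  ultimately show ?thesis by simp
qed

lemma uncap_brauer: "uncap m H u \<in> brauer m"
proof (rule brauerI)
  fix p
  show "p \<notin> pts m \<Longrightarrow> uncap m H u p = p" using capped_facts u brauerD(4)[OF H] by (auto simp: uncap_def)
  assume p: "p \<in> pts m"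
  show "uncap m H u p \<in> pts m" "uncap m H u p \<noteq> p" "uncap m H u (uncap m H u p) = p"
  proof (atomize (full), cases "p \<in> {Top 1, u, Top m, H u}")
    case True thus "uncap m H u p \<in> pts m \<and> uncap m H u p \<noteq> p \<and> uncap m H u (uncap m H u p) = p"
      using uncap_values capped_facts u by auto
  next
    case False
    thus "uncap m H u p \<in> pts m \<and> uncap m H u p \<noteq> p \<and> uncap m H u (uncap m H u p) = p"
      using uncap_values(5) H_other brauerD[OF H] p by simp
  qed
qed

lemma e_product_uncap: "e_product m (uncap m H u) = H"
proof
  fix p
  show "e_product m (uncap m H u) p = H p"
  proof (cases "p \<in> pts m \<and> p \<notin> {Top 1, u, Top m, H u}")
    case True thus ?thesis using uncap_values(5) H_other by (simp add: e_product_def)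
  next
    case False thus ?thesis using uncap_values capped_facts H1 u brauerD(4)[OF H]
      by (auto simp: e_product_def)
  qed
qed

end


section \<open>The wall\<close>

text \<open>Points on the same side: top points left of the wall and bottom points right of it
  form one side, the remaining points the other.  The walled condition says precisely that
  every strand joins two points on opposite sides.\<close>
definition side :: "nat \<Rightarrow> pt \<Rightarrow> bool" where
  "side r p = (is_top p = (idx p \<le> r))"

lemma walled_iff_side:
  "d \<in> walled r s \<longleftrightarrow> d \<in> brauer (r + s) \<and> (\<forall>p\<in>pts (r + s). side r (d p) \<noteq> side r p)"
  unfolding walled_def side_def by auto

lemma e_product_side:
  assumes m: "2 \<le> m" and a_side: "\<forall>p\<in>pts m. side r (a p) \<noteq> side r p"
    and c: "side r (Top 1) \<noteq> side r (Top m)"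
  shows "\<forall>p\<in>pts m. side r (e_product m a p) \<noteq> side r p"
proof
  fix p assume p: "p \<in> pts m"
  have "side r (a p) \<noteq> side r p" "side r (a (Top 1)) \<noteq> side r (Top 1)"
    "side r (a (Top m)) \<noteq> side r (Top m)"
    using a_side p m by auto
  moreover have "e_product m a p = (if p = Top 1 then Top m else if p = Top m then Top 1
      else if a p = Top 1 then a (Top m) else if a p = Top m then a (Top 1) else a p)"
    using p by (simp add: e_product_def)
  ultimately show "side r (e_product m a p) \<noteq> side r p" using c by (smt (verit))
qed

lemma uncap_side:
  assumes m: "2 \<le> m" and H: "H \<in> brauer m" and H1: "H (Top 1) = Top m"
    and u: "u \<in> pts m" "u \<noteq> Top 1" "u \<noteq> Top m"
    and H_side: "\<forall>p\<in>pts m. side r (H p) \<noteq> side r p" and c: "side r (Top 1) \<noteq> side r (Top m)"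
    and u_side: "side r u \<noteq> side r (Top 1)"
  shows "\<forall>p\<in>pts m. side r (uncap m H u p) \<noteq> side r p"
proof
  fix p assume p: "p \<in> pts m"
  note uncap_eqs = uncap_values[OF m H H1 u]
  have "side r (H u) \<noteq> side r u" using H_side u by auto
  show "side r (uncap m H u p) \<noteq> side r p"
  proof (cases "p \<in> {Top 1, u, Top m, H u}")
    case True
    thus ?thesis using uncap_eqs(1-4) \<open>side r (H u) \<noteq> side r u\<close> c u_side by auto
  next
    case False
    thus ?thesis using uncap_eqs(5) H_side p by simp
  qed
qed

lemma walled_lift:
  assumes m: "2 \<le> m" and a: "a \<in> brauer m" and a_side: "\<forall>p\<in>pts m. side r (a p) \<noteq> side r p"
    and c: "side r (Top 1) \<noteq> side r (Top m)"
    and u: "u \<in> pts m" "u \<noteq> Top 1" "u \<noteq> Top m" and u_side: "side r u \<noteq> side r (Top 1)"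
  shows "\<exists>b\<in>brauer m. (\<forall>p\<in>pts m. side r (b p) \<noteq> side r p)
     \<and> b (Top 1) = u \<and> b (Top m) = e_product m a u
     \<and> compose m b (e_diag m 1 m) = compose m a (e_diag m 1 m) \<and> loops m b (e_diag m 1 m) = 0"
proof -
  define H where "H = e_product m a"
  have H: "H \<in> brauer m" using e_product_brauer[OF m a] by (simp add: H_def)
  have H1: "H (Top 1) = Top m" using m by (simp add: H_def e_product_def)
  define b where "b = uncap m H u"
  have b: "b \<in> brauer m" unfolding b_def by (rule uncap_brauer[OF m H H1 u])
  have "compose m b (e_diag m 1 m) = compose m a (e_diag m 1 m)"
    using compose_e_diag[OF m b] compose_e_diag[OF m a] e_product_uncap[OF m H H1 u]
    by (simp add: b_def H_def)
  moreover have "b (Top 1) = u" "b (Top m) = H u"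
    using uncap_values[OF m H H1 u] by (simp_all add: b_def)
  moreover have "loops m b (e_diag m 1 m) = 0"
    using loops_e_diag[OF m b] \<open>b (Top 1) = u\<close> u by simp
  moreover have "\<forall>p\<in>pts m. side r (b p) \<noteq> side r p"
    using uncap_side[OF m H H1 u _ c u_side] e_product_side[OF m a_side c] by (simp add: b_def H_def)
  ultimately show ?thesis using b by (auto simp: H_def)
qed


section \<open>The embeddings on diagrams\<close>

lemma ext_right_brauer: assumes d: "d \<in> brauer M" shows "ext_right M d \<in> brauer (Suc M)"
proof (rule brauerI)
  note b = brauerD[OF d]
  fix p
  show "p \<notin> pts (Suc M) \<Longrightarrow> ext_right M d p = p"
    using b(4)[of p] by (auto simp: ext_right_def pts_Suc)
  assume p: "p \<in> pts (Suc M)"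
  show "ext_right M d p \<in> pts (Suc M)" "ext_right M d p \<noteq> p" "ext_right M d (ext_right M d p) = p"
  proof (atomize (full), cases "p \<in> pts M")
    case True
    have "d p \<in> pts M" using b(1)[OF True] .
    thus "ext_right M d p \<in> pts (Suc M) \<and> ext_right M d p \<noteq> p \<and> ext_right M d (ext_right M d p) = p"
      using True b(2)[OF True] b(3)[of p] by (auto simp: ext_right_def pts_Suc)
  next
    case False
    hence "p = Top (M + 1) \<or> p = Bot (M + 1)" using p pts_Suc by auto
    thus "ext_right M d p \<in> pts (Suc M) \<and> ext_right M d p \<noteq> p \<and> ext_right M d (ext_right M d p) = p"
      by (auto simp: ext_right_def)
  qed
qed

lemma ext_right_walled_iff:
  assumes d: "d \<in> brauer (r + s)"
  shows "ext_right (r + s) d \<in> walled r (s + 1) \<longleftrightarrow> d \<in> walled r s"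
proof -
  have old: "ext_right (r + s) d p = d p" if "p \<in> pts (r + s)" for p
    using that by (auto simp: ext_right_def)
  have new: "side r (ext_right (r + s) d p) \<noteq> side r p"
    if "p = Top (r + s + 1) \<or> p = Bot (r + s + 1)" for p
    using that by (auto simp: ext_right_def side_def)
  have "(\<forall>p\<in>pts (Suc (r + s)). side r (ext_right (r + s) d p) \<noteq> side r p)
      \<longleftrightarrow> (\<forall>p\<in>pts (r + s). side r (d p) \<noteq> side r p)"
    using old new pts_Suc[of _ "r + s"] by (metis Suc_eq_plus1)
  thus ?thesis using ext_right_brauer[OF d] d unfolding walled_iff_side by simp
qed

definition cut_right :: "nat \<Rightarrow> diagram \<Rightarrow> diagram" where
  "cut_right M b = (\<lambda>p. if p \<in> pts M then b p else p)"

lemma ext_right_cut_right: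
  assumes b: "b \<in> brauer (Suc M)" and vert: "b (Top (Suc M)) = Bot (Suc M)"
  shows "cut_right M b \<in> brauer M" "ext_right M (cut_right M b) = b"
proof -
  note bD = brauerD[OF b]
  have vert': "b (Bot (Suc M)) = Top (Suc M)" using brauer_partner[OF b vert] .
  have stays: "b p \<in> pts M" if "p \<in> pts M" for p
  proof -
    have "b p \<noteq> Top (Suc M)" "b p \<noteq> Bot (Suc M)"
      using that vert vert' by (auto dest: brauer_partner[OF b])
    thus ?thesis using bD(1)[of p] that pts_Suc[of _ M] by auto
  qed
  show "cut_right M b \<in> brauer M"
    by (rule brauerI) (use stays bD in \<open>auto simp: cut_right_def pts_Suc\<close>)
  show "ext_right M (cut_right M b) = b"
  proof
    fix p
    show "ext_right M (cut_right M b) p = b p"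
      using vert vert' bD(4)[of p] pts_Suc[of p M] by (auto simp: ext_right_def cut_right_def)
  qed
qed


lemma shift_down_up [simp]: "shift_down (shift_up p) = p"
  by (cases p) auto

lemma shift_up_down: "1 \<le> idx p \<Longrightarrow> shift_up (shift_down p) = p"
  by (cases p) auto

lemma idx_shift_up [simp]: "idx (shift_up p) = Suc (idx p)"
  by (cases p) auto

lemma shift_up_inj [simp]: "shift_up p = shift_up q \<longleftrightarrow> p = q"
  by (metis shift_down_up)

lemma shift_up_pts [simp]: "shift_up p \<in> pts (Suc M) \<longleftrightarrow> p \<in> pts M \<or> idx p = 0"
  by (auto simp: pts_iff)

lemma side_shift_up [simp]: "side (Suc r) (shift_up p) = side r p"
  by (cases p) (auto simp: side_def)

lemma pt_cases_left:
  obtains "p = Top 1" | "p = Bot 1" | "idx p = 0" | q where "1 \<le> idx q" "p = shift_up q"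
proof (cases "2 \<le> idx p")
  case True
  thus ?thesis using that(4)[of "shift_down p"] shift_up_down[of p] by (cases p) auto
next
  case False
  hence "idx p = 0 \<or> idx p = 1" by auto
  thus ?thesis using that(1-3) by (cases p) auto
qed

lemma ext_left_shift_up: "1 \<le> idx q \<Longrightarrow> ext_left d (shift_up q) = shift_up (d q)"
  by (cases q) (auto simp: ext_left_def)

lemma ext_left_brauer: assumes d: "d \<in> brauer M" shows "ext_left d \<in> brauer (Suc M)"
proof -
  note b = brauerD[OF d]
  have idx_d: "1 \<le> idx (d q)" if "1 \<le> idx q" for q
    using b(1)[of q] b(4)[of q] that by (cases "q \<in> pts M") (auto simp: pts_iff)
  have "ext_left d p \<in> pts (Suc M) \<and> ext_left d p \<noteq> p \<and> ext_left d (ext_left d p) = p"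
    if p: "p \<in> pts (Suc M)" for p
  proof (cases p rule: pt_cases_left)
    case 4
    then obtain q where q: "1 \<le> idx q" "p = shift_up q" by blast
    hence "q \<in> pts M" using p by auto
    thus ?thesis using q b idx_d by (auto simp: ext_left_shift_up)
  qed (use p in \<open>auto simp: ext_left_def pts_iff\<close>)
  moreover have "ext_left d p = p" if p: "p \<notin> pts (Suc M)" for p
  proof (cases p rule: pt_cases_left)
    case 4
    then obtain q where q: "1 \<le> idx q" "p = shift_up q" by blast
    hence "q \<notin> pts M" using p by auto
    thus ?thesis using q b(4) by (simp add: ext_left_shift_up)
  qed (use p in \<open>auto simp: ext_left_def\<close>)
  ultimately show ?thesis by (intro brauerI) auto
qed

lemma ext_left_walled_iff:
  assumes d: "d \<in> brauer (r + s)"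
  shows "ext_left d \<in> walled (r + 1) s \<longleftrightarrow> d \<in> walled r s"
proof -
  have "(\<forall>p\<in>pts (Suc (r + s)). side (Suc r) (ext_left d p) \<noteq> side (Suc r) p)
      \<longleftrightarrow> (\<forall>q\<in>pts (r + s). side r (d q) \<noteq> side r q)"
  proof
    assume ext_side: "\<forall>p\<in>pts (Suc (r + s)). side (Suc r) (ext_left d p) \<noteq> side (Suc r) p"
    show "\<forall>q\<in>pts (r + s). side r (d q) \<noteq> side r q"
    proof
      fix q assume q: "q \<in> pts (r + s)"
      hence "shift_up q \<in> pts (Suc (r + s))" "1 \<le> idx q" by (auto simp: pts_iff)
      hence "side (Suc r) (shift_up (d q)) \<noteq> side (Suc r) (shift_up q)"
        using ext_side ext_left_shift_up by fastforce
      thus "side r (d q) \<noteq> side r q" by simp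
    qed
  next
    assume q: "\<forall>q\<in>pts (r + s). side r (d q) \<noteq> side r q"
    show "\<forall>p\<in>pts (Suc (r + s)). side (Suc r) (ext_left d p) \<noteq> side (Suc r) p"
    proof
      fix p assume p: "p \<in> pts (Suc (r + s))"
      show "side (Suc r) (ext_left d p) \<noteq> side (Suc r) p"
      proof (cases p rule: pt_cases_left)
        case 4
        then obtain q' where "1 \<le> idx q'" "p = shift_up q'" by blast
        moreover from this have "q' \<in> pts (r + s)" using p by auto
        ultimately show ?thesis using q by (simp add: ext_left_shift_up)
      qed (use p in \<open>auto simp: ext_left_def side_def pts_iff\<close>)
    qed
  qed
  thus ?thesis using ext_left_brauer[OF d] d unfolding walled_iff_side by simp
qed

definition cut_left :: "nat \<Rightarrow> diagram \<Rightarrow> diagram" where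
  "cut_left M b = (\<lambda>p. if p \<in> pts M then shift_down (b (shift_up p)) else p)"

lemma cut_left_shift_up:
  assumes b: "b \<in> brauer (Suc M)" and vert: "b (Top 1) = Bot 1" and q: "q \<in> pts M"
  shows "cut_left M b q \<in> pts M" "shift_up (cut_left M b q) = b (shift_up q)"
proof -
  have x: "b (shift_up q) \<in> pts (Suc M)" using brauerD(1)[OF b] q by simp
  have "b (shift_up q) \<noteq> Top 1"
    using q vert by (cases q) (auto dest: brauer_partner[OF b])
  moreover have "b (shift_up q) \<noteq> Bot 1"
    using q brauer_partner[OF b vert] by (cases q) (auto dest: brauer_partner[OF b])
  ultimately obtain q' where "1 \<le> idx q'" "b (shift_up q) = shift_up q'"
    using x by (cases "b (shift_up q)" rule: pt_cases_left) (auto simp: pts_iff)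
  thus "cut_left M b q \<in> pts M" "shift_up (cut_left M b q) = b (shift_up q)"
    using q x by (simp_all add: cut_left_def)
qed

lemma ext_left_cut_left:
  assumes b: "b \<in> brauer (Suc M)" and vert: "b (Top 1) = Bot 1"
  shows "cut_left M b \<in> brauer M" "ext_left (cut_left M b) = b"
proof -
  note bD = brauerD[OF b] and shifted = cut_left_shift_up[OF b vert]
  let ?d = "cut_left M b"
  show "?d \<in> brauer M"
  proof (rule brauerI)
    fix q
    show "q \<notin> pts M \<Longrightarrow> ?d q = q" by (simp add: cut_left_def)
    assume q: "q \<in> pts M"
    show "?d q \<in> pts M" using shifted(1)[OF q] .
    show "?d q \<noteq> q" using shifted(2)[OF q] bD(2)[of "shift_up q"] q by auto
    have "shift_up (?d (?d q)) = shift_up q"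
      using shifted[OF q] shifted(2)[of "?d q"] bD(3) by simp
    thus "?d (?d q) = q" by simp
  qed
  show "ext_left ?d = b"
  proof
    fix p
    show "ext_left ?d p = b p"
    proof (cases p rule: pt_cases_left)
      case 4
      then obtain q where q: "1 \<le> idx q" "p = shift_up q" by blast
      show ?thesis
      proof (cases "q \<in> pts M")
        case True thus ?thesis using q shifted(2) by (simp add: ext_left_shift_up)
      next
        case False
        hence "p \<notin> pts (Suc M)" using q by auto
        thus ?thesis using q False bD(4) by (simp add: ext_left_shift_up cut_left_def)
      qed
    qed (use vert brauer_partner[OF b vert] bD(4) in \<open>auto simp: ext_left_def pts_iff\<close>)
  qed
qed

lemma walled_subset_brauer: "walled r s \<subseteq> brauer (r + s)"
  by (auto simp: walled_def)

text \<open>The lift is chosen so that p_1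
  is joined with the former partner of bar p_m, leaving a vertical strand at position m.\<close>
lemma iota_reduction:
  assumes r: "1 \<le> r" and a: "a \<in> walled r (s + 1)"
  shows "\<exists>d\<in>walled r s.
     compose (Suc (r + s)) (ext_right (r + s) d) (e_diag (Suc (r + s)) 1 (Suc (r + s)))
       = compose (Suc (r + s)) a (e_diag (Suc (r + s)) 1 (Suc (r + s)))
     \<and> loops (Suc (r + s)) (ext_right (r + s) d) (e_diag (Suc (r + s)) 1 (Suc (r + s))) = 0"
proof -
  define m where "m = Suc (r + s)"
  have m: "2 \<le> m" using r by (simp add: m_def)
  have a_brauer: "a \<in> brauer m" and a_side: "\<forall>p\<in>pts m. side r (a p) \<noteq> side r p"
    using a by (simp_all add: walled_iff_side m_def)
  have c: "side r (Top 1) \<noteq> side r (Top m)" and bot_side: "side r (Bot m) = side r (Top 1)"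
    using r by (auto simp: side_def m_def)
  define H where "H = e_product m a"
  note H = e_product_brauer[OF m a_brauer, folded H_def]
  define u where "u = H (Bot m)"
  have Hm: "H (Top m) = Top 1" using m by (simp add: H_def e_product_def)
  have u: "u \<in> pts m" "u \<noteq> Top 1" "u \<noteq> Top m"
    using brauerD[OF H, of "Bot m"] Hm brauer_partner[OF H Hm] m
    by (auto simp: u_def dest: brauer_partner[OF H])
  have "side r u \<noteq> side r (Top 1)"
    using e_product_side[OF m a_side c] m bot_side by (auto simp: u_def H_def)
  then obtain b where b: "b \<in> brauer m" "\<forall>p\<in>pts m. side r (b p) \<noteq> side r p"
      "b (Top m) = H u" "compose m b (e_diag m 1 m) = compose m a (e_diag m 1 m)"
      "loops m b (e_diag m 1 m) = 0"
    using walled_lift[OF m a_brauer a_side c u] by (auto simp: H_def)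
  have "b (Top m) = Bot m" using b(3) brauerD(3)[OF H] by (simp add: u_def)
  note d = ext_right_cut_right[OF b(1)[unfolded m_def] this[unfolded m_def]]
  have "b \<in> walled r (s + 1)" using b(1,2) by (simp add: walled_iff_side m_def)
  hence "cut_right (r + s) b \<in> walled r s" using ext_right_walled_iff[OF d(1)] d(2) by simp
  thus ?thesis using d(2) b(4,5) by (intro bexI[of _ "cut_right (r + s) b"]) (simp_all add: m_def)
qed

text \<open>Part (2): the same for iota', choosing the lift that joins p_1 with bar p_1, so that
  a vertical strand remains at position 1.\<close>
lemma iota'_reduction:
  assumes s: "1 \<le> s" and a: "a \<in> walled (r + 1) s"
  shows "\<exists>d\<in>walled r s.
     compose (Suc (r + s)) (ext_left d) (e_diag (Suc (r + s)) 1 (Suc (r + s)))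
       = compose (Suc (r + s)) a (e_diag (Suc (r + s)) 1 (Suc (r + s)))
     \<and> loops (Suc (r + s)) (ext_left d) (e_diag (Suc (r + s)) 1 (Suc (r + s))) = 0"
proof -
  define m where "m = Suc (r + s)"
  have m: "2 \<le> m" using s by (simp add: m_def)
  have a_brauer: "a \<in> brauer m" and a_side: "\<forall>p\<in>pts m. side (r + 1) (a p) \<noteq> side (r + 1) p"
    using a by (simp_all add: walled_iff_side m_def)
  have c: "side (r + 1) (Top 1) \<noteq> side (r + 1) (Top m)"
    and u_side: "side (r + 1) (Bot 1) \<noteq> side (r + 1) (Top 1)"
    using s by (auto simp: side_def m_def)
  have u: "Bot 1 \<in> pts m" "Bot 1 \<noteq> Top 1" "Bot 1 \<noteq> Top m" using m by auto
  obtain b where b: "b \<in> brauer m" "\<forall>p\<in>pts m. side (r + 1) (b p) \<noteq> side (r + 1) p"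
      "b (Top 1) = Bot 1" "compose m b (e_diag m 1 m) = compose m a (e_diag m 1 m)"
      "loops m b (e_diag m 1 m) = 0"
    using walled_lift[OF m a_brauer a_side c u u_side] by auto
  note d = ext_left_cut_left[OF b(1)[unfolded m_def] b(3)]
  have "b \<in> walled (r + 1) s" using b(1,2) by (simp add: walled_iff_side m_def)
  hence "cut_left (r + s) b \<in> walled r s" using ext_left_walled_iff[OF d(1)] d(2) by simp
  thus ?thesis using d(2) b(4,5) by (intro bexI[of _ "cut_left (r + s) b"]) (simp_all add: m_def)
qed

lemma right_ideal_iota:
  fixes \<delta> :: "'a::comm_ring_1"
  assumes r: "1 \<le> r"
  shows "{bmult (r + s + 1) \<delta> x (basis (e_diag (r + s + 1) 1 (r + s + 1))) | x.
          x \<in> walled_alg r (s + 1)}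
    = {bmult (r + s + 1) \<delta> (iota r s x) (basis (e_diag (r + s + 1) 1 (r + s + 1))) | x.
          x \<in> walled_alg r s}"
  unfolding walled_alg_eq_supported iota_def Suc_eq_plus1[symmetric]
proof (rule right_mult_image_eq)
  show "e_diag (Suc (r + s)) 1 (Suc (r + s)) \<in> brauer (Suc (r + s))"
    using r by (intro e_diag_brauer) auto
  show "ext_right (r + s) ` brauer (r + s) \<subseteq> brauer (Suc (r + s))"
    using ext_right_brauer by blast
  show "ext_right (r + s) ` walled r s \<subseteq> walled r (Suc s)"
    using ext_right_walled_iff walled_subset_brauer by fastforce
qed (use walled_subset_brauer[of r "Suc s"] walled_subset_brauer[of r s] iota_reduction[OF r] in auto)

lemma right_ideal_iota':
  fixes \<delta> :: "'a::comm_ring_1"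
  assumes s: "1 \<le> s"
  shows "{bmult (r + s + 1) \<delta> x (basis (e_diag (r + s + 1) 1 (r + s + 1))) | x.
          x \<in> walled_alg (r + 1) s}
    = {bmult (r + s + 1) \<delta> (iota' r s x) (basis (e_diag (r + s + 1) 1 (r + s + 1))) | x.
          x \<in> walled_alg r s}"
  unfolding walled_alg_eq_supported iota'_def Suc_eq_plus1[symmetric]
proof (rule right_mult_image_eq)
  show "e_diag (Suc (r + s)) 1 (Suc (r + s)) \<in> brauer (Suc (r + s))"
    using s by (intro e_diag_brauer) auto
  show "ext_left ` brauer (r + s) \<subseteq> brauer (Suc (r + s))"
    using ext_left_brauer by blast
  show "ext_left ` walled r s \<subseteq> walled (Suc r) s"
    using ext_left_walled_iff walled_subset_brauer by fastforce
qed (use walled_subset_brauer[of "Suc r" s] walled_subset_brauer[of r s] iota'_reduction[OF s] in auto)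

theorem mainTheorem14:
  fixes \<delta> :: "'a::comm_ring_1" and r s :: nat
  shows "(1 \<le> r \<longrightarrow>
      {bmult (r + s + 1) \<delta> x (basis (e_diag (r + s + 1) 1 (r + s + 1))) | x.
          x \<in> walled_alg r (s + 1)}
    = {bmult (r + s + 1) \<delta> (iota r s x) (basis (e_diag (r + s + 1) 1 (r + s + 1))) | x.
          x \<in> walled_alg r s})
   \<and> (1 \<le> s \<longrightarrow>
      {bmult (r + s + 1) \<delta> x (basis (e_diag (r + s + 1) 1 (r + s + 1))) | x.
          x \<in> walled_alg (r + 1) s}
    = {bmult (r + s + 1) \<delta> (iota' r s x) (basis (e_diag (r + s + 1) 1 (r + s + 1))) | x.
          x \<in> walled_alg r s})"
  using right_ideal_iota[of r s \<delta>] right_ideal_iota'[of s r \<delta>] by blast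

end
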